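(* Let $F$ be a field, $M$ an $F$-algebra and $B$ a separable $F$-subalgebra of $M$. Then every first-order deformation $\varphi:B\to M$ is given by conjugation: there exists an invertible $a\in M$ such that $\varphi(b)=aba^{-1}$ for every $b\in B$. In particular, any such deformation extends to an automorphism of $M$ and fixes $B\cap Z(M)$ pointwise.
   Context: A first-order deformation of a subalgebra $B\subseteq M$ is an $F$-linear map $\varphi:B\to M$ such that $\delta=\varphi-\mathrm{id}$ satisfies $\delta(bc)=\delta(b)c+b\delta(c)$ and $\delta(b)\delta(c)=0$ for all $b,c\in B$. $B$ is separable if it admits a separating idempotent $e\in B\otimes_F B$ (image $1$ under multiplication and $(b\otimes1)e=e(1\otimes b)$ for all $b\in B$), equivalently $B$ is semisimple with étale center. $Z(M)$ is the center of $M$. *)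

theory Defs
  imports Complex_Main
begin

definition algebra_over :: "('f::field \<Rightarrow> 'm::ring_1 \<Rightarrow> 'm) \<Rightarrow> bool" where
  "algebra_over s \<longleftrightarrow> vector_space s \<and>
     (\<forall>c x y. s c (x * y) = s c x * y \<and> s c (x * y) = x * s c y)"

definition subalgebra :: "('f::field \<Rightarrow> 'm::ring_1 \<Rightarrow> 'm) \<Rightarrow> 'm set \<Rightarrow> bool" where
  "subalgebra s B \<longleftrightarrow> module.subspace s B \<and> 1 \<in> B \<and> (\<forall>x\<in>B. \<forall>y\<in>B. x * y \<in> B)"

definition bilinear_form_on :: "('f::field \<Rightarrow> 'm::ring_1 \<Rightarrow> 'm) \<Rightarrow> 'm set \<Rightarrow> ('m \<Rightarrow> 'm \<Rightarrow> 'f) \<Rightarrow> bool" where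
  "bilinear_form_on s B \<beta> \<longleftrightarrow>
     (\<forall>x\<in>B. \<forall>y\<in>B. \<forall>z\<in>B. \<beta> (x + y) z = \<beta> x z + \<beta> y z \<and> \<beta> z (x + y) = \<beta> z x + \<beta> z y) \<and>
     (\<forall>x\<in>B. \<forall>z\<in>B. \<forall>c. \<beta> (s c x) z = c * \<beta> x z \<and> \<beta> z (s c x) = c * \<beta> z x)"

text \<open>Elements of B \<otimes>_F B are represented by finite lists of pairs (sum of x \<otimes> y).
  Two such represent the same tensor iff every F-bilinear form on B x B
  takes the same value on them (B \<otimes>_F B is the vector space whose dual is the
  space of bilinear forms; over a field functionals separate points).\<close>
definition tensor_eq :: "('f::field \<Rightarrow> 'm::ring_1 \<Rightarrow> 'm) \<Rightarrow> 'm set \<Rightarrow> ('m \<times> 'm) list \<Rightarrow> ('m \<times> 'm) list \<Rightarrow> bool" where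
  "tensor_eq s B xs ys \<longleftrightarrow>
     (\<forall>\<beta>. bilinear_form_on s B \<beta> \<longrightarrow>
        (\<Sum>(x, y)\<leftarrow>xs. \<beta> x y) = (\<Sum>(x, y)\<leftarrow>ys. \<beta> x y))"

text \<open>Separating idempotent e = \<Sum> x_i \<otimes> y_i in B \<otimes>_F B: multiplication maps it to 1
  and (b \<otimes> 1) e = e (1 \<otimes> b) for all b in B.\<close>
definition separating_idempotent :: "('f::field \<Rightarrow> 'm::ring_1 \<Rightarrow> 'm) \<Rightarrow> 'm set \<Rightarrow> ('m \<times> 'm) list \<Rightarrow> bool" where
  "separating_idempotent s B e \<longleftrightarrow>
     set e \<subseteq> B \<times> B \<and> (\<Sum>(x, y)\<leftarrow>e. x * y) = 1 \<and>
     (\<forall>b\<in>B. tensor_eq s B (map (\<lambda>(x, y). (b * x, y)) e) (map (\<lambda>(x, y). (x, y * b)) e))"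

definition separable :: "('f::field \<Rightarrow> 'm::ring_1 \<Rightarrow> 'm) \<Rightarrow> 'm set \<Rightarrow> bool" where
  "separable s B \<longleftrightarrow> (\<exists>e. separating_idempotent s B e)"

text \<open>First-order deformation \<phi> : B \<rightarrow> M (only values on B matter).\<close>
definition first_order_deformation :: "('f::field \<Rightarrow> 'm::ring_1 \<Rightarrow> 'm) \<Rightarrow> 'm set \<Rightarrow> ('m \<Rightarrow> 'm) \<Rightarrow> bool" where
  "first_order_deformation s B \<phi> \<longleftrightarrow>
     (\<forall>x\<in>B. \<forall>y\<in>B. \<phi> (x + y) = \<phi> x + \<phi> y) \<and>
     (\<forall>x\<in>B. \<forall>c. \<phi> (s c x) = s c (\<phi> x)) \<and>
     (let \<delta> = (\<lambda>x. \<phi> x - x) in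
       (\<forall>b\<in>B. \<forall>c\<in>B. \<delta> (b * c) = \<delta> b * c + b * \<delta> c) \<and>
       (\<forall>b\<in>B. \<forall>c\<in>B. \<delta> b * \<delta> c = 0))"

definition algebra_automorphism :: "('f::field \<Rightarrow> 'm::ring_1 \<Rightarrow> 'm) \<Rightarrow> ('m \<Rightarrow> 'm) \<Rightarrow> bool" where
  "algebra_automorphism s \<sigma> \<longleftrightarrow> bij \<sigma> \<and> Vector_Spaces.linear s s \<sigma> \<and>
     \<sigma> 1 = 1 \<and> (\<forall>x y. \<sigma> (x * y) = \<sigma> x * \<sigma> y)"

definition center :: "'m::ring_1 set" where
  "center = {z. \<forall>x. z * x = x * z}"

end

theory Submission
  imports Defs
begin

text \<open>
  Put \<open>\<delta> = \<phi> - id\<close>; it is a derivation of \<open>B\<close> into \<open>M\<close> with \<open>\<delta>(B) \<delta>(B) = 0\<close>.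
  For a separating idempotent \<open>e = \<Sum> x\<^sub>i \<otimes> y\<^sub>i\<close> the element \<open>m = \<Sum> x\<^sub>i \<delta>(y\<^sub>i)\<close>
  satisfies \<open>b m - m b = \<delta>(b)\<close>: this is the vanishing of the first Hochschild cohomology
  of a separable algebra. Since \<open>\<delta>(y) w \<delta>(z) = \<delta>(y) (\<delta>(w z) - \<delta>(w) z) = 0\<close>, also
  \<open>m b m = 0\<close>, in particular \<open>m\<^sup>2 = 0\<close>. Hence \<open>a = 1 - m\<close> is a unit with inverse \<open>1 + m\<close>,
  and \<open>a b a\<^sup>-\<^sup>1 = b + b m - m b - m b m = b + \<delta>(b) = \<phi>(b)\<close>.
\<close>

definition bilinear_on ::
  "('f::field \<Rightarrow> 'a::ab_group_add \<Rightarrow> 'a) \<Rightarrow> ('f \<Rightarrow> 'b::ab_group_add \<Rightarrow> 'b) \<Rightarrow> 'a set \<Rightarrow> ('a \<Rightarrow> 'a \<Rightarrow> 'b) \<Rightarrow> bool"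
  where
  "bilinear_on s t B g \<longleftrightarrow>
     (\<forall>x\<in>B. \<forall>y\<in>B. \<forall>z\<in>B. g (x + y) z = g x z + g y z \<and> g z (x + y) = g z x + g z y) \<and>
     (\<forall>x\<in>B. \<forall>z\<in>B. \<forall>c. g (s c x) z = t c (g x z) \<and> g z (s c x) = t c (g z x))"

definition derivation_on :: "('f::field \<Rightarrow> 'm::ring_1 \<Rightarrow> 'm) \<Rightarrow> 'm set \<Rightarrow> ('m \<Rightarrow> 'm) \<Rightarrow> bool"
  where
  "derivation_on s B \<delta> \<longleftrightarrow>
     (\<forall>x\<in>B. \<forall>y\<in>B. \<delta> (x + y) = \<delta> x + \<delta> y) \<and>
     (\<forall>x\<in>B. \<forall>c. \<delta> (s c x) = s c (\<delta> x)) \<and>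
     (\<forall>x\<in>B. \<forall>y\<in>B. \<delta> (x * y) = \<delta> x * y + x * \<delta> y)"

lemma (in vector_space) exists_linear_functional_eq_1:
  assumes "v \<noteq> 0"
  shows "\<exists>f. Vector_Spaces.linear scale ((*) :: 'a \<Rightarrow> 'a \<Rightarrow> 'a) f \<and> f v = 1"
proof -
  have "vector_space ((*) :: 'a \<Rightarrow> 'a \<Rightarrow> 'a)"
    by unfold_locales (auto simp: algebra_simps)
  then interpret pair: vector_space_pair scale "(*) :: 'a \<Rightarrow> 'a \<Rightarrow> 'a"
    by (simp add: vector_space_pair_def vector_space_axioms)
  from pair.linear_independent_extend[of "{v}" "\<lambda>_. 1"] assms show ?thesis
    by auto
qed

lemma sum_list_map_eq_0:
  "(\<And>x. x \<in> set xs \<Longrightarrow> f x = 0) \<Longrightarrow> (\<Sum>x\<leftarrow>xs. f x) = (0 :: 'a::monoid_add)"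
  by (induction xs) simp_all

lemma (in Vector_Spaces.linear) sum_list: "f (sum_list xs) = sum_list (map f xs)"
  by (induction xs) (simp_all add: add)

text \<open>
  \<open>tensor_eq\<close> only tests bilinear forms, but linear functionals separate the points of a
  vector space, so it identifies the values of bilinear maps into any vector space.
\<close>
lemma tensor_eq_imp_sum_eq:
  fixes t :: "'f::field \<Rightarrow> 'v::ab_group_add \<Rightarrow> 'v"
  assumes "vector_space t" and "tensor_eq s B xs ys" and "bilinear_on s t B g"
  shows "(\<Sum>(x, y)\<leftarrow>xs. g x y) = (\<Sum>(x, y)\<leftarrow>ys. g x y)"
proof (rule ccontr)
  interpret vector_space t by fact
  assume "\<not> ?thesis"
  then obtain f where f: "Vector_Spaces.linear t ((*) :: 'f \<Rightarrow> 'f \<Rightarrow> 'f) f"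
    and f_diff: "f ((\<Sum>(x, y)\<leftarrow>xs. g x y) - (\<Sum>(x, y)\<leftarrow>ys. g x y)) = 1"
    using exists_linear_functional_eq_1 by (metis right_minus_eq)
  interpret f: Vector_Spaces.linear t "(*) :: 'f \<Rightarrow> 'f \<Rightarrow> 'f" f by fact
  have "bilinear_form_on s B (\<lambda>x y. f (g x y))"
    using assms(3) by (simp add: bilinear_on_def bilinear_form_on_def f.add f.scale)
  with assms(2) have "(\<Sum>(x, y)\<leftarrow>xs. f (g x y)) = (\<Sum>(x, y)\<leftarrow>ys. f (g x y))"
    unfolding tensor_eq_def by blast
  then have "f ((\<Sum>(x, y)\<leftarrow>xs. g x y) - (\<Sum>(x, y)\<leftarrow>ys. g x y)) = 0"
    by (simp add: f.diff f.sum_list o_def case_prod_unfold)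
  with f_diff show False
    by simp
qed

lemma derivation_on_first_order_deformation:
  assumes "algebra_over s" and "first_order_deformation s B \<phi>"
  shows "derivation_on s B (\<lambda>x. \<phi> x - x)"
proof -
  interpret vector_space s
    using assms(1) by (simp add: algebra_over_def)
  show ?thesis
    using assms(2)
    by (simp add: first_order_deformation_def derivation_on_def scale_right_diff_distrib)
qed

definition derivation_potential :: "('m \<times> 'm) list \<Rightarrow> ('m \<Rightarrow> 'm::ring_1) \<Rightarrow> 'm" where
  "derivation_potential e \<delta> = (\<Sum>(x, y)\<leftarrow>e. x * \<delta> y)"

lemma derivation_eq_commutator_potential:
  assumes "algebra_over s" and "separating_idempotent s B e" and "derivation_on s B \<delta>"
    and "b \<in> B"
  shows "\<delta> b = b * derivation_potential e \<delta> - derivation_potential e \<delta> * b"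
proof -
  have vs: "vector_space s" and scale_mult: "\<And>c x y. s c (x * y) = s c x * y"
    "\<And>c x y. s c (x * y) = x * s c y"
    using assms(1) unfolding algebra_over_def by blast+
  interpret vector_space s by (fact vs)
  have e_B: "set e \<subseteq> B \<times> B" and e_1: "(\<Sum>(x, y)\<leftarrow>e. x * y) = 1"
    and e_comm: "tensor_eq s B (map (\<lambda>(x, y). (b * x, y)) e) (map (\<lambda>(x, y). (x, y * b)) e)"
    using assms(2,4) by (simp_all add: separating_idempotent_def)
  have \<delta>_add: "\<And>x y. x \<in> B \<Longrightarrow> y \<in> B \<Longrightarrow> \<delta> (x + y) = \<delta> x + \<delta> y"
    and \<delta>_scale: "\<And>x c. x \<in> B \<Longrightarrow> \<delta> (s c x) = s c (\<delta> x)"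
    and leibniz: "\<And>x y. x \<in> B \<Longrightarrow> y \<in> B \<Longrightarrow> \<delta> (x * y) = \<delta> x * y + x * \<delta> y"
    using assms(3) by (simp_all add: derivation_on_def)
  have "bilinear_on s s B (\<lambda>x y. x * \<delta> y)"
    by (simp add: bilinear_on_def \<delta>_add \<delta>_scale distrib_left distrib_right
        flip: scale_mult)
  then have "(\<Sum>(x, y)\<leftarrow>e. b * x * \<delta> y) = (\<Sum>(x, y)\<leftarrow>e. x * \<delta> (y * b))"
    using tensor_eq_imp_sum_eq[OF vs e_comm] by (simp add: o_def case_prod_unfold)
  also have "\<dots> = (\<Sum>(x, y)\<leftarrow>e. x * \<delta> y * b + x * y * \<delta> b)"
    using e_B assms(4) by (intro arg_cong[where f = sum_list] map_cong)
      (auto simp: leibniz distrib_left mult.assoc)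
  also have "\<dots> = (\<Sum>(x, y)\<leftarrow>e. x * \<delta> y) * b + (\<Sum>(x, y)\<leftarrow>e. x * y) * \<delta> b"
    by (simp add: sum_list_addf sum_list_mult_const case_prod_unfold)
  finally show ?thesis
    using e_1
    by (simp add: derivation_potential_def sum_list_const_mult case_prod_unfold mult.assoc)
qed

lemma derivation_sandwich_eq_0:
  assumes "derivation_on s B \<delta>" and "\<forall>b\<in>B. \<forall>c\<in>B. \<delta> b * \<delta> c = 0"
    and "\<forall>x\<in>B. \<forall>y\<in>B. x * y \<in> B" and "y \<in> B" "w \<in> B" "z \<in> B"
  shows "\<delta> y * w * \<delta> z = 0"
proof -
  have "\<delta> y * w * \<delta> z = \<delta> y * \<delta> (w * z) - \<delta> y * \<delta> w * z"
    using assms(1,5,6) by (simp add: derivation_on_def algebra_simps)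
  also have "\<dots> = 0"
    using assms(2-6) by simp
  finally show ?thesis .
qed

lemma derivation_potential_sandwich_eq_0:
  fixes \<delta> :: "'m::ring_1 \<Rightarrow> 'm"
  assumes "set e \<subseteq> B \<times> B" and "\<forall>x\<in>B. \<forall>y\<in>B. x * y \<in> B"
    and "\<And>y w z. y \<in> B \<Longrightarrow> w \<in> B \<Longrightarrow> z \<in> B \<Longrightarrow> \<delta> y * w * \<delta> z = 0" and "b \<in> B"
  shows "derivation_potential e \<delta> * b * derivation_potential e \<delta> = 0"
proof -
  define m where "m = derivation_potential e \<delta>"
  have right_zero: "\<delta> y * b * m = 0" if "y \<in> B" for y
  proof -
    have "\<delta> y * b * m = (\<Sum>(x, z)\<leftarrow>e. \<delta> y * (b * x) * \<delta> z)"
      by (simp add: m_def derivation_potential_def case_prod_unfold mult.assoc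
          flip: sum_list_const_mult)
    also have "\<dots> = 0"
      using assms that by (intro sum_list_map_eq_0) auto
    finally show ?thesis .
  qed
  have "m * b * m = (\<Sum>(x, y)\<leftarrow>e. x * (\<delta> y * b * m))"
    by (simp add: m_def derivation_potential_def case_prod_unfold mult.assoc
        flip: sum_list_mult_const)
  also have "\<dots> = 0"
    using assms(1) right_zero by (intro sum_list_map_eq_0) auto
  finally show ?thesis
    by (simp add: m_def)
qed

lemma algebra_automorphism_conjugation:
  assumes "algebra_over s" and "a * a' = 1" and "a' * a = 1"
  shows "algebra_automorphism s (\<lambda>x. a * x * a')"
  unfolding algebra_automorphism_def
proof (intro conjI allI)
  have "(\<lambda>x. a' * x * a) \<circ> (\<lambda>x. a * x * a') = id" "(\<lambda>x. a * x * a') \<circ> (\<lambda>x. a' * x * a) = id"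
    using assms(2,3) by (simp_all add: fun_eq_iff) (metis mult.assoc mult_1_left mult_1_right)+
  then show "bij (\<lambda>x. a * x * a')"
    using o_bij by blast
  have vs: "vector_space s" and scale_mult: "\<And>c x y. s c (x * y) = s c x * y"
    "\<And>c x y. s c (x * y) = x * s c y"
    using assms(1) unfolding algebra_over_def by blast+
  show "Vector_Spaces.linear s s (\<lambda>x. a * x * a')"
    using vs by (simp add: Vector_Spaces.linear_iff distrib_left distrib_right flip: scale_mult)
  show "a * 1 * a' = 1"
    using assms(2) by simp
  fix x y
  have "a * x * a' * (a * y * a') = a * x * (a' * a) * y * a'"
    by (simp add: mult.assoc)
  then show "a * (x * y) * a' = a * x * a' * (a * y * a')"
    using assms(3) by (simp add: mult.assoc)
qed

lemma conjugation_fixes_center: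
  assumes "a * a' = 1" and "b \<in> center"
  shows "a * b * a' = b"
proof -
  have "a * b * a' = a * (a' * b)"
    using assms(2) by (simp add: center_def mult.assoc)
  then show ?thesis
    using assms(1) by (simp flip: mult.assoc)
qed

theorem theorem4p6:
  fixes s :: "'f::field \<Rightarrow> 'm::ring_1 \<Rightarrow> 'm"
    and B :: "'m set" and \<phi> :: "'m \<Rightarrow> 'm"
  assumes "algebra_over s"
    and "subalgebra s B"
    and "separable s B"
    and "first_order_deformation s B \<phi>"
  shows "(\<exists>a a'. a * a' = 1 \<and> a' * a = 1 \<and> (\<forall>b\<in>B. \<phi> b = a * b * a'))
    \<and> (\<exists>\<sigma>. algebra_automorphism s \<sigma> \<and> (\<forall>b\<in>B. \<sigma> b = \<phi> b))
    \<and> (\<forall>b\<in>B \<inter> center. \<phi> b = b)"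
proof -
  define \<delta> where "\<delta> x = \<phi> x - x" for x
  obtain e where e: "separating_idempotent s B e"
    using assms(3) by (auto simp: separable_def)
  define m where "m = derivation_potential e \<delta>"
  have \<delta>: "derivation_on s B \<delta>"
    using derivation_on_first_order_deformation[OF assms(1,4)] by (simp add: \<delta>_def[abs_def])
  have square_zero: "\<forall>b\<in>B. \<forall>c\<in>B. \<delta> b * \<delta> c = 0"
    using assms(4) by (simp add: first_order_deformation_def \<delta>_def)
  have B_mult: "\<forall>x\<in>B. \<forall>y\<in>B. x * y \<in> B" and "1 \<in> B"
    using assms(2) by (simp_all add: subalgebra_def)
  have sandwich: "m * b * m = 0" if "b \<in> B" for b
    using e that derivation_sandwich_eq_0[OF \<delta> square_zero B_mult]
    unfolding m_def separating_idempotent_def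
    by (intro derivation_potential_sandwich_eq_0[OF _ B_mult]) auto
  have unit: "(1 - m) * (1 + m) = 1" "(1 + m) * (1 - m) = 1"
    using sandwich[OF \<open>1 \<in> B\<close>] by (simp_all add: algebra_simps)
  have conj: "\<phi> b = (1 - m) * b * (1 + m)" if "b \<in> B" for b
    using derivation_eq_commutator_potential[OF assms(1) e \<delta> that] sandwich[OF that]
    by (simp add: m_def \<delta>_def algebra_simps)
  have central: "\<phi> b = b" if "b \<in> B \<inter> center" for b
    using that conj conjugation_fixes_center[OF unit(1)] by simp
  have "algebra_automorphism s (\<lambda>x. (1 - m) * x * (1 + m))"
    using algebra_automorphism_conjugation[OF assms(1) unit] .
  then show ?thesis
    using unit conj central by (metis (no_types, lifting))
qed

end
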